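(* If $G$ is a connected digraph that is not regular, then $\vec{\chi}(G) \leq \Delta_{max}(G)$.
   Context: Digraphs have no loops and no parallel arcs, but may contain digons. A digraph is connected if its underlying undirected graph is connected. A digraph is $k$-regular if $d^+(v)=d^-(v)=k$ for every vertex $v$; it is regular if it is $k$-regular for some $k$. $\vec{\chi}(G)$ is the dichromatic number (minimum number of colours in a colouring of $V(G)$ with no monochromatic directed cycle), and $\Delta_{max}(G)=\max_v \max(d^+(v),d^-(v))$. *)

theory Defs
  imports Main
begin

text \<open>A digraph is given by a finite vertex set V and an arc relation A \<subseteq> V \<times> V
  without loops (parallel arcs are impossible since A is a set; digons allowed).\<close>

definition digraph :: "'a set \<Rightarrow> ('a \<times> 'a) set \<Rightarrow> bool" where
  "digraph V A \<longleftrightarrow> finite V \<and> A \<subseteq> V \<times> V \<and> (\<forall>v. (v, v) \<notin> A)"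

definition out_deg :: "('a \<times> 'a) set \<Rightarrow> 'a \<Rightarrow> nat" where
  "out_deg A v = card {w. (v, w) \<in> A}"

definition in_deg :: "('a \<times> 'a) set \<Rightarrow> 'a \<Rightarrow> nat" where
  "in_deg A v = card {u. (u, v) \<in> A}"

definition dconnected :: "'a set \<Rightarrow> ('a \<times> 'a) set \<Rightarrow> bool" where
  "dconnected V A \<longleftrightarrow> (\<forall>u\<in>V. \<forall>v\<in>V. (u, v) \<in> (A \<union> A\<inverse>)\<^sup>*)"

definition k_regular :: "'a set \<Rightarrow> ('a \<times> 'a) set \<Rightarrow> nat \<Rightarrow> bool" where
  "k_regular V A k \<longleftrightarrow> (\<forall>v\<in>V. out_deg A v = k \<and> in_deg A v = k)"

definition regular :: "'a set \<Rightarrow> ('a \<times> 'a) set \<Rightarrow> bool" where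
  "regular V A \<longleftrightarrow> (\<exists>k. k_regular V A k)"

definition acyclic_colouring :: "'a set \<Rightarrow> ('a \<times> 'a) set \<Rightarrow> nat \<Rightarrow> ('a \<Rightarrow> nat) \<Rightarrow> bool" where
  "acyclic_colouring V A k c \<longleftrightarrow> (\<forall>v\<in>V. c v < k) \<and>
     (\<forall>i<k. acyclic (A \<inter> ({v\<in>V. c v = i} \<times> {v\<in>V. c v = i})))"

definition dichromatic_number :: "'a set \<Rightarrow> ('a \<times> 'a) set \<Rightarrow> nat" where
  "dichromatic_number V A = (LEAST k. \<exists>c. acyclic_colouring V A k c)"

definition Delta_max :: "'a set \<Rightarrow> ('a \<times> 'a) set \<Rightarrow> nat" where
  "Delta_max V A = Max ({0} \<union> (\<lambda>v. max (out_deg A v) (in_deg A v)) ` V)"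

end

theory Submission imports Defs begin

text \<open>Start from a vertex r whose in- or out-degree is below \<open>\<Delta> = \<Delta>\<^sub>m\<^sub>a\<^sub>x\<close>; it exists because
  G is not regular. Connectivity gives an ordering of the vertices ending in r in which every
  other vertex has a neighbour later in the order. Colour greedily along this order: when a
  vertex u is reached, the part of its out- or in-neighbourhood coloured so far misses a
  neighbour, so it has fewer than \<open>\<Delta>\<close> elements and some colour a among \<open>\<Delta>\<close> avoids it. Then u
  is a sink or a source of its colour class, and no monochromatic cycle passes through u.\<close>

lemma acyclic_insert_sink:
  assumes "acyclic R" "u \<notin> Domain R" "u \<notin> X"
  shows "acyclic (R \<union> X \<times> {u})"
proof -
  let ?R' = "R \<union> X \<times> {u}"
  have no_out: "(u, z) \<notin> ?R'" for z
    using assms(2,3) by blast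
  have path: "(x, y) \<in> R\<^sup>+ \<or> y = u" if "(x, y) \<in> ?R'\<^sup>+" for x y
    using that
  proof (induction rule: trancl_induct)
    case (base y)
    then show ?case by blast
  next
    case (step y z)
    with no_out have "(x, y) \<in> R\<^sup>+" by blast
    with step.hyps(2) show ?case by (blast intro: trancl_into_trancl)
  qed
  show ?thesis
    unfolding acyclic_def
  proof
    fix x
    show "(x, x) \<notin> ?R'\<^sup>+"
    proof
      assume cycle: "(x, x) \<in> ?R'\<^sup>+"
      show False
      proof (cases "x = u")
        case True
        with cycle no_out show False by (metis tranclD)
      next
        case False
        with path[OF cycle] assms(1) show False by (simp add: acyclic_def)
      qed
    qed
  qed
qed

lemma acyclic_colouring_converse:
  "acyclic_colouring S (A\<inverse>) k c \<longleftrightarrow> acyclic_colouring S A k c"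
proof -
  have "A\<inverse> \<inter> (C \<times> C) = (A \<inter> (C \<times> C))\<inverse>" for C
    by auto
  then show ?thesis
    unfolding acyclic_colouring_def by (simp add: acyclic_converse)
qed

lemma acyclic_colouring_insert_out:
  assumes col: "acyclic_colouring S A k c" and "u \<notin> S" "(u, u) \<notin> A" "a < k"
    and fresh: "a \<notin> c ` {w \<in> S. (u, w) \<in> A}"
  shows "acyclic_colouring (insert u S) A k (c(u := a))"
proof -
  let ?cls = "\<lambda>S c i. {v \<in> S. c v = i}"
  have cls: "?cls (insert u S) (c(u := a)) i =
      (if i = a then insert u (?cls S c i) else ?cls S c i)" for i
    using \<open>u \<notin> S\<close> by auto
  have old: "acyclic (A \<inter> (?cls S c i \<times> ?cls S c i))" if "i < k" for i
    using col that unfolding acyclic_colouring_def by blast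
  have new: "acyclic (A \<inter> (insert u C \<times> insert u C))" if C: "C = ?cls S c a" for C
  proof (rule acyclic_subset)
    have "u \<notin> C"
      using \<open>u \<notin> S\<close> C by blast
    then show "acyclic (A \<inter> (C \<times> C) \<union> C \<times> {u})"
      using old[OF \<open>a < k\<close>] C by (intro acyclic_insert_sink) blast+
    have "(u, y) \<notin> A" if "y \<in> C" for y
      using fresh that C by blast
    with \<open>(u, u) \<notin> A\<close> show "A \<inter> (insert u C \<times> insert u C) \<subseteq> A \<inter> (C \<times> C) \<union> C \<times> {u}"
      by blast
  qed
  show ?thesis
    unfolding acyclic_colouring_def
  proof (intro conjI ballI allI impI)
    show "(c(u := a)) v < k" if "v \<in> insert u S" for v
      using that col \<open>a < k\<close> unfolding acyclic_colouring_def by auto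
    fix i
    assume "i < k"
    show "acyclic (A \<inter> (?cls (insert u S) (c(u := a)) i \<times> ?cls (insert u S) (c(u := a)) i))"
    proof (cases "i = a")
      case True
      then show ?thesis
        using new[OF refl] by (simp only: cls simp_thms if_True)
    next
      case False
      then show ?thesis
        using old[OF \<open>i < k\<close>] by (simp only: cls if_False)
    qed
  qed
qed

lemma acyclic_colouring_insert_in:
  assumes "acyclic_colouring S A k c" "u \<notin> S" "(u, u) \<notin> A" "a < k"
    and "a \<notin> c ` {w \<in> S. (w, u) \<in> A}"
  shows "acyclic_colouring (insert u S) A k (c(u := a))"
proof -
  have "acyclic_colouring (insert u S) (A\<inverse>) k (c(u := a))"
    using assms by (intro acyclic_colouring_insert_out) (simp_all add: acyclic_colouring_converse)
  then show ?thesis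
    by (simp only: acyclic_colouring_converse)
qed

lemma exists_less_not_in_image:
  assumes "finite N" "card N < (k::nat)"
  obtains a where "a < k" "a \<notin> f ` N"
proof -
  have "card (f ` N) < card {..<k}"
    using card_image_le[OF assms(1), of f] assms(2) by simp
  then have "\<not> {..<k} \<subseteq> f ` N"
    using card_mono[OF finite_imageI[OF assms(1)]] by (meson not_le)
  then show ?thesis
    using that by blast
qed

lemma greedy_acyclic_colouring:
  assumes "distinct xs" "\<forall>v. (v, v) \<notin> A"
    and "\<And>ys u zs. xs = ys @ u # zs \<Longrightarrow>
      card {w \<in> set ys. (u, w) \<in> A} < k \<or> card {w \<in> set ys. (w, u) \<in> A} < k"
  obtains c where "acyclic_colouring (set xs) A k c"
  using assms(1,3)
proof (induction xs arbitrary: thesis rule: rev_induct)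
  case Nil
  show ?case
    by (rule Nil.prems(1)[of "\<lambda>_. 0"]) (simp add: acyclic_colouring_def acyclic_def)
next
  case (snoc u xs)
  have "distinct xs" "u \<notin> set xs"
    using snoc.prems(2) by simp_all
  moreover have "card {w \<in> set ys. (u', w) \<in> A} < k \<or> card {w \<in> set ys. (w, u') \<in> A} < k"
    if "xs = ys @ u' # zs" for ys u' zs
    using snoc.prems(3)[of ys u' "zs @ [u]"] that by simp
  ultimately obtain c where c: "acyclic_colouring (set xs) A k c"
    using snoc.IH by blast
  have "card {w \<in> set xs. (u, w) \<in> A} < k \<or> card {w \<in> set xs. (w, u) \<in> A} < k"
    using snoc.prems(3)[of xs u "[]"] by simp
  then obtain a where "acyclic_colouring (insert u (set xs)) A k (c(u := a))"
  proof
    assume low: "card {w \<in> set xs. (u, w) \<in> A} < k"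
    have "finite {w \<in> set xs. (u, w) \<in> A}"
      by simp
    from this low obtain a where "a < k" "a \<notin> c ` {w \<in> set xs. (u, w) \<in> A}"
      by (rule exists_less_not_in_image)
    with c \<open>u \<notin> set xs\<close> assms(2) show ?thesis
      by (intro that acyclic_colouring_insert_out) auto
  next
    assume low: "card {w \<in> set xs. (w, u) \<in> A} < k"
    have "finite {w \<in> set xs. (w, u) \<in> A}"
      by simp
    from this low obtain a where "a < k" "a \<notin> c ` {w \<in> set xs. (w, u) \<in> A}"
      by (rule exists_less_not_in_image)
    with c \<open>u \<notin> set xs\<close> assms(2) show ?thesis
      by (intro that acyclic_colouring_insert_in) auto
  qed
  then show ?case
    using snoc.prems(1) by simp
qed

lemma rtrancl_exits_set:
  assumes "(x, y) \<in> R\<^sup>*" "x \<in> S" "y \<notin> S"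
  obtains a b where "(a, b) \<in> R" "a \<in> S" "b \<notin> S"
  using assms by (induction rule: rtrancl_induct) auto

text \<open>The order is built backwards from r: prepend a vertex outside the current list that is
  adjacent to some vertex already in it.\<close>

lemma connected_vertex_order:
  assumes "finite V" "A \<subseteq> V \<times> V" "r \<in> V"
    and con: "\<forall>v\<in>V. (r, v) \<in> (A \<union> A\<inverse>)\<^sup>*"
  obtains xs where "distinct xs" "set xs = V"
    "\<And>ys u zs. xs = ys @ u # zs \<Longrightarrow> u \<noteq> r \<Longrightarrow> \<exists>w\<in>set zs. (u, w) \<in> A \<or> (w, u) \<in> A"
proof -
  let ?later = "\<lambda>xs. \<forall>ys u zs. xs = ys @ u # zs \<longrightarrow> u \<noteq> r \<longrightarrow>
      (\<exists>w\<in>set zs. (u, w) \<in> A \<or> (w, u) \<in> A)"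
  have extend: "\<exists>xs'. distinct xs' \<and> set xs' = V \<and> ?later xs'"
    if "card (V - set xs) = n" "distinct xs" "set xs \<subseteq> V" "r \<in> set xs" "?later xs" for n xs
    using that
  proof (induction n arbitrary: xs)
    case 0
    then have "set xs = V"
      using \<open>finite V\<close> by auto
    with 0 show ?case by blast
  next
    case (Suc n)
    then obtain v where v: "v \<in> V" "v \<notin> set xs"
      by (metis card.empty Diff_eq_empty_iff nat.distinct(1) subsetI)
    obtain a b where ab: "(a, b) \<in> A \<union> A\<inverse>" "a \<in> set xs" "b \<notin> set xs"
      using rtrancl_exits_set[OF con[rule_format, OF v(1)] Suc.prems(4) v(2)] by blast
    have "b \<in> V"
      using ab(1) assms(2) by auto
    have "V - set (b # xs) = (V - set xs) - {b}"
      by auto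
    then have "card (V - set (b # xs)) = n"
      using Suc.prems(1) \<open>b \<in> V\<close> ab(3) \<open>finite V\<close> by (simp add: card_Diff_singleton)
    moreover have "distinct (b # xs)" "set (b # xs) \<subseteq> V" "r \<in> set (b # xs)"
      using Suc.prems(2-4) ab(3) \<open>b \<in> V\<close> by auto
    moreover have "?later (b # xs)"
    proof (intro allI impI)
      fix ys u zs
      assume split: "b # xs = ys @ u # zs" and "u \<noteq> r"
      show "\<exists>w\<in>set zs. (u, w) \<in> A \<or> (w, u) \<in> A"
      proof (cases ys)
        case Nil
        with split ab(1,2) show ?thesis by auto
      next
        case (Cons y ys')
        with split have "xs = ys' @ u # zs" by simp
        with Suc.prems(5) \<open>u \<noteq> r\<close> show ?thesis by blast
      qed
    qed
    ultimately show ?case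
      by (rule Suc.IH)
  qed
  have "?later [r]"
    by (auto simp: Cons_eq_append_conv)
  then have "\<exists>xs. distinct xs \<and> set xs = V \<and> ?later xs"
    using extend[OF refl, where xs = "[r]"] assms(3) by simp
  then show ?thesis
    using that by blast
qed

lemma finite_out_neighbours: "digraph V A \<Longrightarrow> finite {w. (v, w) \<in> A}"
  unfolding digraph_def by (metis (no_types, lifting) finite_subset mem_Sigma_iff mem_Collect_eq subsetI subsetD)

lemma finite_in_neighbours: "digraph V A \<Longrightarrow> finite {w. (w, v) \<in> A}"
  unfolding digraph_def by (metis (no_types, lifting) finite_subset mem_Sigma_iff mem_Collect_eq subsetI subsetD)

lemma degrees_le_Delta_max:
  assumes "finite V" "v \<in> V"
  shows "out_deg A v \<le> Delta_max V A" "in_deg A v \<le> Delta_max V A"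
proof -
  have "max (out_deg A v) (in_deg A v) \<le> Delta_max V A"
    unfolding Delta_max_def using assms by (intro Max_ge) auto
  then show "out_deg A v \<le> Delta_max V A" "in_deg A v \<le> Delta_max V A"
    by simp_all
qed

lemma not_regular_obtains_low_degree:
  assumes "finite V" "\<not> regular V A"
  obtains r where "r \<in> V" "out_deg A r < Delta_max V A \<or> in_deg A r < Delta_max V A"
proof -
  have "\<not> k_regular V A (Delta_max V A)"
    using assms(2) unfolding regular_def by blast
  then show ?thesis
    using that degrees_le_Delta_max[OF assms(1)] unfolding k_regular_def by (meson le_neq_trans)
qed

lemma card_prefix_neighbours_less:
  assumes "digraph V A" "u \<in> V" "w \<notin> Y"
  shows "(u, w) \<in> A \<Longrightarrow> card {y \<in> Y. (u, y) \<in> A} < Delta_max V A"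
    and "(w, u) \<in> A \<Longrightarrow> card {y \<in> Y. (y, u) \<in> A} < Delta_max V A"
proof -
  have fin: "finite V"
    using assms(1) unfolding digraph_def by blast
  show "card {y \<in> Y. (u, y) \<in> A} < Delta_max V A" if "(u, w) \<in> A"
  proof -
    have "card {y \<in> Y. (u, y) \<in> A} < out_deg A u"
      unfolding out_deg_def using that assms(3) finite_out_neighbours[OF assms(1)]
      by (intro psubset_card_mono) auto
    then show ?thesis
      using degrees_le_Delta_max[OF fin assms(2), where A = A] by linarith
  qed
  show "card {y \<in> Y. (y, u) \<in> A} < Delta_max V A" if "(w, u) \<in> A"
  proof -
    have "card {y \<in> Y. (y, u) \<in> A} < in_deg A u"
      unfolding in_deg_def using that assms(3) finite_in_neighbours[OF assms(1)]
      by (intro psubset_card_mono) auto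
    then show ?thesis
      using degrees_le_Delta_max[OF fin assms(2), where A = A] by linarith
  qed
qed

lemma order_prefix_neighbours_less:
  assumes "digraph V A" "distinct xs" "set xs = V"
    and low: "out_deg A r < Delta_max V A \<or> in_deg A r < Delta_max V A"
    and later: "\<And>ys u zs. xs = ys @ u # zs \<Longrightarrow> u \<noteq> r \<Longrightarrow> \<exists>w\<in>set zs. (u, w) \<in> A \<or> (w, u) \<in> A"
    and split: "xs = ys @ u # zs"
  shows "card {w \<in> set ys. (u, w) \<in> A} < Delta_max V A \<or> card {w \<in> set ys. (w, u) \<in> A} < Delta_max V A"
proof (cases "u = r")
  case True
  have "card {w \<in> set ys. (u, w) \<in> A} \<le> out_deg A u" "card {w \<in> set ys. (w, u) \<in> A} \<le> in_deg A u"
    unfolding out_deg_def in_deg_def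
    using finite_out_neighbours[OF assms(1)] finite_in_neighbours[OF assms(1)]
    by (auto intro: card_mono)
  with low True show ?thesis
    by (simp only:) linarith
next
  case False
  then obtain w where "w \<in> set zs" "(u, w) \<in> A \<or> (w, u) \<in> A"
    using later[OF split] by blast
  moreover have "w \<notin> set ys" "u \<in> V"
    using assms(2,3) split \<open>w \<in> set zs\<close> by auto
  ultimately show ?thesis
    using card_prefix_neighbours_less[OF assms(1)] by blast
qed

theorem lemma2:
  fixes V :: "'a set" and A :: "('a \<times> 'a) set"
  assumes "digraph V A" and "dconnected V A" and "\<not> regular V A"
  shows "dichromatic_number V A \<le> Delta_max V A"
proof -
  have fin: "finite V" and "A \<subseteq> V \<times> V" and loopless: "\<forall>v. (v, v) \<notin> A"
    using assms(1) unfolding digraph_def by auto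
  obtain r where r: "r \<in> V" "out_deg A r < Delta_max V A \<or> in_deg A r < Delta_max V A"
    using not_regular_obtains_low_degree[OF fin assms(3)] .
  have "\<forall>v\<in>V. (r, v) \<in> (A \<union> A\<inverse>)\<^sup>*"
    using assms(2) r(1) unfolding dconnected_def by blast
  then obtain xs where xs: "distinct xs" "set xs = V" and later:
    "\<And>ys u zs. xs = ys @ u # zs \<Longrightarrow> u \<noteq> r \<Longrightarrow> \<exists>w\<in>set zs. (u, w) \<in> A \<or> (w, u) \<in> A"
    by (rule connected_vertex_order[OF fin \<open>A \<subseteq> V \<times> V\<close> r(1)]) blast
  obtain c where "acyclic_colouring (set xs) A (Delta_max V A) c"
    using greedy_acyclic_colouring[OF xs(1) loopless
        order_prefix_neighbours_less[OF assms(1) xs r(2) later]] .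
  then show ?thesis
    unfolding dichromatic_number_def xs(2) by (auto intro: Least_le)
qed

end
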